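(* Let $\mathcal{H}=(Q_0,Q_1,\beta)$ be a directed tensor-labeled hypergraph over $\mathbb{R}$. With the conventions $\delta_{\le-1}(\mathcal{H}):=|V_{\mathrm{macro}}|-c_{\mathrm{macro}}$ and $L_{\le-1}:=0$, for every $k\ge0$, $$\mathrm{rank}(L_{\le k})-\mathrm{rank}(L_{\le k-1})=\delta_{\le k-1}(\mathcal{H})-\delta_{\le k}(\mathcal{H}).$$
   Context: $T(\mathbb{R}^{Q_0})=\bigoplus_{k\ge0}(\mathbb{R}^{Q_0})^{\otimes k}$ with the inner product making the standard tensor basis orthonormal; $\pi_{\le k}$ is the orthogonal projection onto degrees $\le k$. A directed tensor-labeled hypergraph is $\mathcal{H}=(Q_0,Q_1,\beta)$ ($Q_0,Q_1$ finite) with $\beta:\mathbb{R}^{Q_1}\to T\times T$ linear, $\beta(\mathbf{1}_e)=(A_e,B_e)$; $\partial_\beta:\mathbf{1}_e\mapsto B_e-A_e$; $L_{\le k}:=(\pi_{\le k}\partial_\beta)^*(\pi_{\le k}\partial_\beta)$ (adjoint with respect to the standard inner products). $V_{\mathrm{macro}}=\{A_e\}\cup\{B_e\}$; macrograph on $V_{\mathrm{macro}}$ with edges $Q_1$, $e:A_e\to B_e$, $c_{\mathrm{macro}}$ its number of weakly connected components; $B_{\mathrm{macro}}:\mathbf{1}_e\mapsto\mathbf{1}_{B_e}-\mathbf{1}_{A_e}$; $\hat\phi:\mathbf{1}_w\mapsto w$; $\delta_{\le k}(\mathcal{H})=\dim(\mathrm{Im}B_{\mathrm{macro}}\cap\mathrm{Ker}(\pi_{\le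 k}\circ\hat\phi))$ for $k\ge0$. *)

theory Defs
  imports "HOL-Analysis.Analysis" "HOL-Library.Function_Algebras"
begin

definition fscale :: "real \<Rightarrow> ('a \<Rightarrow> real) \<Rightarrow> ('a \<Rightarrow> real)" where
  "fscale c f = (\<lambda>x. c * f x)"

global_interpretation fvs: vector_space "fscale :: real \<Rightarrow> ('a \<Rightarrow> real) \<Rightarrow> ('a \<Rightarrow> real)"
  by unfold_locales (auto simp: fscale_def fun_eq_iff algebra_simps)

text \<open>R^S for a set S, realised as the functions vanishing outside S.\<close>
definition coord_space :: "'a set \<Rightarrow> ('a \<Rightarrow> real) set" where
  "coord_space S = {x. \<forall>a. a \<notin> S \<longrightarrow> x a = 0}"

text \<open>An element of T(R^Q0) is a finitely supported function on words over Q0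
(the standard tensor basis; a word of length k is a basis tensor of degree k).
The standard inner product makes words orthonormal.\<close>

definition is_tensor :: "'v set \<Rightarrow> ('v list \<Rightarrow> real) \<Rightarrow> bool" where
  "is_tensor Q0 t \<longleftrightarrow> finite {w. t w \<noteq> 0} \<and> (\<forall>w. t w \<noteq> 0 \<longrightarrow> set w \<subseteq> Q0)"

definition words_le :: "'v set \<Rightarrow> int \<Rightarrow> 'v list set" where
  "words_le Q0 k = {w. set w \<subseteq> Q0 \<and> int (length w) \<le> k}"

definition trunc :: "int \<Rightarrow> ('v list \<Rightarrow> real) \<Rightarrow> ('v list \<Rightarrow> real)" where
  "trunc k t = (\<lambda>w. if int (length w) \<le> k then t w else 0)"

text \<open>A directed tensor-labeled hypergraph (Q0, Q1, beta) with beta(1_e) = (A e, B e).\<close>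
definition tl_hypergraph :: "'v set \<Rightarrow> 'e set \<Rightarrow> ('e \<Rightarrow> 'v list \<Rightarrow> real) \<Rightarrow> ('e \<Rightarrow> 'v list \<Rightarrow> real) \<Rightarrow> bool" where
  "tl_hypergraph Q0 Q1 A B \<longleftrightarrow> finite Q0 \<and> finite Q1 \<and>
     (\<forall>e\<in>Q1. is_tensor Q0 (A e) \<and> is_tensor Q0 (B e))"

definition bdry :: "'e set \<Rightarrow> ('e \<Rightarrow> 'v list \<Rightarrow> real) \<Rightarrow> ('e \<Rightarrow> 'v list \<Rightarrow> real) \<Rightarrow> ('e \<Rightarrow> real) \<Rightarrow> ('v list \<Rightarrow> real)" where
  "bdry Q1 A B x = (\<lambda>w. \<Sum>e\<in>Q1. x e * (B e w - A e w))"

text \<open>Adjoint of trunc k \<circ> bdry with respect to the standard inner products: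
  its value on a tensor t at e is the inner product of trunc k (B_e - A_e) with t.\<close>
definition bdry_adj :: "'v set \<Rightarrow> 'e set \<Rightarrow> ('e \<Rightarrow> 'v list \<Rightarrow> real) \<Rightarrow> ('e \<Rightarrow> 'v list \<Rightarrow> real) \<Rightarrow> int \<Rightarrow> ('v list \<Rightarrow> real) \<Rightarrow> ('e \<Rightarrow> real)" where
  "bdry_adj Q0 Q1 A B k t = (\<lambda>e. if e \<in> Q1 then (\<Sum>w\<in>words_le Q0 k. (B e w - A e w) * t w) else 0)"

definition Lop :: "'v set \<Rightarrow> 'e set \<Rightarrow> ('e \<Rightarrow> 'v list \<Rightarrow> real) \<Rightarrow> ('e \<Rightarrow> 'v list \<Rightarrow> real) \<Rightarrow> int \<Rightarrow> ('e \<Rightarrow> real) \<Rightarrow> ('e \<Rightarrow> real)" where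
  "Lop Q0 Q1 A B k x = bdry_adj Q0 Q1 A B k (trunc k (bdry Q1 A B x))"

definition rankL :: "'v set \<Rightarrow> 'e set \<Rightarrow> ('e \<Rightarrow> 'v list \<Rightarrow> real) \<Rightarrow> ('e \<Rightarrow> 'v list \<Rightarrow> real) \<Rightarrow> int \<Rightarrow> nat" where
  "rankL Q0 Q1 A B k = (if k < 0 then 0 else fvs.dim (Lop Q0 Q1 A B k ` coord_space Q1))"

definition Vmacro :: "'e set \<Rightarrow> ('e \<Rightarrow> 'v list \<Rightarrow> real) \<Rightarrow> ('e \<Rightarrow> 'v list \<Rightarrow> real) \<Rightarrow> ('v list \<Rightarrow> real) set" where
  "Vmacro Q1 A B = A ` Q1 \<union> B ` Q1"

definition macro_conn :: "'e set \<Rightarrow> ('e \<Rightarrow> 'v list \<Rightarrow> real) \<Rightarrow> ('e \<Rightarrow> 'v list \<Rightarrow> real) \<Rightarrow> (('v list \<Rightarrow> real) \<times> ('v list \<Rightarrow> real)) set" where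
  "macro_conn Q1 A B = ({(A e, B e) | e. e \<in> Q1} \<union> {(B e, A e) | e. e \<in> Q1})\<^sup>*"

definition c_macro :: "'e set \<Rightarrow> ('e \<Rightarrow> 'v list \<Rightarrow> real) \<Rightarrow> ('e \<Rightarrow> 'v list \<Rightarrow> real) \<Rightarrow> nat" where
  "c_macro Q1 A B = card (Vmacro Q1 A B // macro_conn Q1 A B)"

definition Bmacro :: "'e set \<Rightarrow> ('e \<Rightarrow> 'v list \<Rightarrow> real) \<Rightarrow> ('e \<Rightarrow> 'v list \<Rightarrow> real) \<Rightarrow> ('e \<Rightarrow> real) \<Rightarrow> (('v list \<Rightarrow> real) \<Rightarrow> real)" where
  "Bmacro Q1 A B x = (\<lambda>v. \<Sum>e\<in>Q1. x e * ((if v = B e then 1 else 0) - (if v = A e then 1 else 0)))"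

definition phihat :: "'e set \<Rightarrow> ('e \<Rightarrow> 'v list \<Rightarrow> real) \<Rightarrow> ('e \<Rightarrow> 'v list \<Rightarrow> real) \<Rightarrow> (('v list \<Rightarrow> real) \<Rightarrow> real) \<Rightarrow> ('v list \<Rightarrow> real)" where
  "phihat Q1 A B y = (\<lambda>w. \<Sum>v\<in>Vmacro Q1 A B. y v * v w)"

definition delta_le :: "'e set \<Rightarrow> ('e \<Rightarrow> 'v list \<Rightarrow> real) \<Rightarrow> ('e \<Rightarrow> 'v list \<Rightarrow> real) \<Rightarrow> int \<Rightarrow> int" where
  "delta_le Q1 A B k =
     (if k < 0 then int (card (Vmacro Q1 A B)) - int (c_macro Q1 A B)
      else int (fvs.dim (Bmacro Q1 A B ` coord_space Q1 \<inter>
                 {y \<in> coord_space (Vmacro Q1 A B). trunc k (phihat Q1 A B y) = (\<lambda>_. 0)})))"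

end

theory Submission
  imports Defs
begin

text \<open>Write \<open>M = trunc k \<circ> bdry\<close>. Since \<open>L\<^sub>\<le>\<^sub>k = M\<^sup>* M\<close>, the operators \<open>L\<^sub>\<le>\<^sub>k\<close> and \<open>M\<close> have the
  same kernel and hence the same rank. The boundary map factors as \<open>bdry = phihat \<circ> Bmacro\<close>, so
  rank-nullity for \<open>trunc k \<circ> phihat\<close> restricted to \<open>U = Im Bmacro\<close> gives
  \<open>rank L\<^sub>\<le>\<^sub>k + \<delta>\<^sub>\<le>\<^sub>k = dim U\<close> for every \<open>k \<ge> 0\<close>. The space \<open>U\<close> is spanned by the incidence
  vectors of the macrograph, whose rank is the number of vertices minus the number of components,
  so \<open>dim U = \<delta>\<^sub>\<le>\<^sub>-\<^sub>1\<close>; taking differences of consecutive \<open>k\<close> gives the claim.\<close>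

section \<open>Rank-nullity for finite-dimensional subspaces\<close>

context vector_space
begin

lemma span_Int_span_disjoint:
  assumes "independent (J \<union> K)" and "J \<inter> K = {}"
  shows "span J \<inter> span K = {0}"
proof (intro equalityI subsetI)
  fix x assume x: "x \<in> span J \<inter> span K"
  have "representation (J \<union> K) x b = 0" for b
  proof -
    have "representation (J \<union> K) x = representation J x"
      using x by (intro representation_extend[OF assms(1)]) auto
    moreover have "representation (J \<union> K) x = representation K x"
      using x by (intro representation_extend[OF assms(1)]) auto
    ultimately show ?thesis
      using representation_ne_zero[of J x b] representation_ne_zero[of K x b] assms(2) by auto
  qed
  then show "x \<in> {0}"
    using sum_nonzero_representation_eq[OF assms(1), of x] x span_mono[of J "J \<union> K"] by auto
qed (simp add: span_zero)

lemma dim_insert_finite: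
  assumes "finite S"
  shows "dim (insert x S) = (if x \<in> span S then dim S else Suc (dim S))"
proof (cases "x \<in> span S")
  case True
  then show ?thesis by (metis dim_span span_redundant)
next
  case False
  obtain B where B: "B \<subseteq> S" "independent B" "S \<subseteq> span B" "card B = dim S"
    using basis_exists by blast
  have "x \<notin> span B"
    using False B(1) span_mono by blast
  moreover have "independent (insert x B)"
    using \<open>x \<notin> span B\<close> B(2) by (rule independent_insertI)
  moreover have "insert x S \<subseteq> span (insert x B)"
    using B(3) span_mono[of B "insert x B"] span_superset[of "insert x B"] by blast
  moreover have "insert x B \<subseteq> insert x S"
    using B(1) by blast
  ultimately have "dim (insert x S) = card (insert x B)"
    by (intro dim_unique) simp_all
  also have "\<dots> = Suc (dim S)"
  proof -
    have "x \<notin> B"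
      using \<open>x \<notin> span B\<close> span_superset[of B] by blast
    then show ?thesis
      using B(4) finite_subset[OF B(1) assms] by simp
  qed
  finally show ?thesis using False by simp
qed

end

context Vector_Spaces.linear
begin

lemma dim_image_plus_dim_kernel:
  assumes S: "vs1.subspace S" and T: "finite T" "S \<subseteq> vs1.span T"
  shows "vs2.dim (f ` S) + vs1.dim {x \<in> S. f x = 0} = vs1.dim S"
proof -
  obtain K where K: "K \<subseteq> {x \<in> S. f x = 0}" "vs1.independent K"
      "{x \<in> S. f x = 0} \<subseteq> vs1.span K" "card K = vs1.dim {x \<in> S. f x = 0}"
    using vs1.basis_exists by blast
  obtain B where B: "K \<subseteq> B" "B \<subseteq> S" "vs1.independent B" "S \<subseteq> vs1.span B"
    using vs1.maximal_independent_subset_extend[of K S] K(1,2) by blast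
  have "finite B"
    using vs1.independent_span_bound[OF T(1) B(3)] B(2) T(2) by blast
  then have "finite K"
    using B(1) finite_subset by blast
  define J where "J = B - K"
  have "vs1.span J \<subseteq> S"
    using S B(2) vs1.span_minimal unfolding J_def by blast
  moreover have "vs1.span J \<inter> vs1.span K = {0}"
    using B(1,3) unfolding J_def by (intro vs1.span_Int_span_disjoint) (auto simp: Un_absorb2)
  ultimately have "x = 0" if "x \<in> vs1.span J" "f x = 0" for x
    using that K(3) by blast
  then have inj: "inj_on f (vs1.span J)"
    using inj_on_iff_eq_0[OF vs1.subspace_span] by blast
  have "f ` S = vs2.span (f ` B)"
    using span_image[of B] vs1.span_subspace[OF B(2,4) S] by simp
  also have "\<dots> = vs2.span (f ` J)"
  proof -
    have "f ` B \<subseteq> insert 0 (f ` J)" "f ` J \<subseteq> f ` B"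
      using B(1) K(1) unfolding J_def by auto
    then show ?thesis
      using vs2.span_mono[of "f ` B" "insert 0 (f ` J)"] vs2.span_mono[of "f ` J" "f ` B"]
      by (simp add: subset_antisym)
  qed
  finally have "vs2.dim (f ` S) = card (f ` J)"
    using vs2.dim_span_eq_card_independent independent_injective_image[OF _ inj]
      vs1.independent_mono[OF B(3)] unfolding J_def by (metis Diff_subset vs2.dim_span)
  also have "\<dots> = card J"
    using card_image[OF inj_on_subset[OF inj vs1.span_superset]] .
  also have "\<dots> = card B - card K"
    using card_Diff_subset[OF \<open>finite K\<close> B(1)] unfolding J_def .
  finally show ?thesis
    using K(4) vs1.basis_card_eq_dim[OF B(2,4,3)] card_mono[OF \<open>finite B\<close> B(1)] by simp
qed

end

section \<open>Incidence vectors and connected components of a graph\<close>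

lemma equiv_rtrancl_sym:
  assumes "sym E"
  shows "equiv UNIV (E\<^sup>*)"
  using assms by (intro equivI refl_rtrancl sym_rtrancl trans_rtrancl) auto

lemma Image_rtrancl_insert_sym_edge:
  assumes "sym E"
  defines "C x \<equiv> E\<^sup>* `` {x}"
  shows "(insert (p, q) (insert (q, p) E))\<^sup>* `` {x} = (if x \<in> C p \<union> C q then C p \<union> C q else C x)"
proof -
  have eq: "equiv UNIV (E\<^sup>*)"
    using assms(1) by (rule equiv_rtrancl_sym)
  have sym: "(y, x) \<in> E\<^sup>*" if "(x, y) \<in> E\<^sup>*" for x y
    using eq that by (meson equivE symD)
  show ?thesis
    unfolding rtrancl_insert C_def
    using sym by (auto intro: rtrancl_trans)
qed

lemma card_quotient_insert_sym_edge:
  assumes "sym E" and W: "finite W" "p \<in> W" "q \<in> W" and pq: "(p, q) \<notin> E\<^sup>*"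
  shows "Suc (card (W // (insert (p, q) (insert (q, p) E))\<^sup>*)) = card (W // E\<^sup>*)"
proof -
  define C where "C x = E\<^sup>* `` {x}" for x
  have equiv: "equiv UNIV (E\<^sup>*)"
    using assms(1) by (rule equiv_rtrancl_sym)
  have C_self: "x \<in> C x" for x
    by (simp add: C_def)
  have C_eq: "C x = C y" if "x \<in> C y" for x y
    using that equiv_class_eq[OF equiv, of y x] unfolding C_def by simp
  have "C p \<noteq> C q"
    using pq eq_equiv_class_iff[OF equiv] unfolding C_def by blast
  define Rest where "Rest = C ` (W - (C p \<union> C q))"
  have "W // E\<^sup>* = C ` W"
    unfolding quotient_def C_def by blast
  also have "\<dots> = insert (C p) (insert (C q) Rest)"
    unfolding Rest_def using W(2,3) C_eq by blast
  finally have old: "W // E\<^sup>* = insert (C p) (insert (C q) Rest)" .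
  have "W // (insert (p, q) (insert (q, p) E))\<^sup>* =
      (\<lambda>x. if x \<in> C p \<union> C q then C p \<union> C q else C x) ` W"
    unfolding quotient_def Image_rtrancl_insert_sym_edge[OF assms(1)] C_def by blast
  also have "\<dots> = insert (C p \<union> C q) Rest"
    unfolding Rest_def using W(2) C_self by (auto simp: image_iff)
  finally have new: "W // (insert (p, q) (insert (q, p) E))\<^sup>* = insert (C p \<union> C q) Rest" .
  have "C p \<notin> Rest" "C q \<notin> Rest" "C p \<union> C q \<notin> Rest"
    unfolding Rest_def using C_self by blast+
  moreover have "finite Rest"
    unfolding Rest_def using W(1) by simp
  ultimately show ?thesis
    unfolding old new using \<open>C p \<noteq> C q\<close> by simp
qed

definition undirected_edges :: "'e set \<Rightarrow> ('e \<Rightarrow> 'w) \<Rightarrow> ('e \<Rightarrow> 'w) \<Rightarrow> ('w \<times> 'w) set" where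
  "undirected_edges F a b = {(a e, b e) | e. e \<in> F} \<union> {(b e, a e) | e. e \<in> F}"

definition incidence :: "('e \<Rightarrow> 'w) \<Rightarrow> ('e \<Rightarrow> 'w) \<Rightarrow> 'e \<Rightarrow> 'w \<Rightarrow> real" where
  "incidence a b e = indicator {b e} - indicator {a e}"

lemma sym_undirected_edges: "sym (undirected_edges F a b)"
  unfolding undirected_edges_def sym_def by blast

lemma undirected_edges_insert:
  "undirected_edges (insert e F) a b = insert (a e, b e) (insert (b e, a e) (undirected_edges F a b))"
  unfolding undirected_edges_def by blast

lemma indicator_diff_in_span_incidence:
  assumes "(x, y) \<in> (undirected_edges F a b)\<^sup>*"
  shows "indicator {y} - indicator {x} \<in> fvs.span (incidence a b ` F)"
  using assms
proof (induction rule: rtrancl_induct)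
  case base
  show ?case
    using fvs.span_zero by (simp add: zero_fun_def)
next
  case (step y z)
  then obtain e where e: "e \<in> F" "(y, z) = (a e, b e) \<or> (y, z) = (b e, a e)"
    unfolding undirected_edges_def by blast
  have "incidence a b e \<in> fvs.span (incidence a b ` F)"
    using e(1) by (intro fvs.span_base) simp
  then have "indicator {z} - indicator {y} \<in> fvs.span (incidence a b ` F)"
    using e(2) fvs.span_neg[of "incidence a b e"] unfolding incidence_def by auto
  from fvs.span_add[OF this step.IH] show ?case
    by (simp only: add_diff_eq diff_add_cancel)
qed

lemma connected_if_indicator_diff_in_span_incidence:
  fixes a b :: "'e \<Rightarrow> 'w"
  assumes "finite F" and "indicator {q} - indicator {p} \<in> fvs.span (incidence a b ` F)"
  shows "(p, q) \<in> (undirected_edges F a b)\<^sup>*"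
proof -
  define C where "C = (undirected_edges F a b)\<^sup>* `` {p}"
  \<comment> \<open>The functional summing over the component of \<open>p\<close> kills every incidence vector.\<close>
  define \<phi> where "\<phi> y = (\<Sum>v\<in>C. y v)" for y :: "'w \<Rightarrow> real"
  have "C \<subseteq> insert p (a ` F \<union> b ` F)"
    unfolding C_def undirected_edges_def by (auto elim: rtranclE)
  then have "finite C"
    using assms(1) finite_subset by blast
  have "\<phi> y = 0" if "y \<in> fvs.span (incidence a b ` F)" for y
    using that
  proof (induction rule: fvs.span_induct)
    case base
    show ?case
      by (rule fvs.subspaceI) (auto simp: \<phi>_def fscale_def sum.distrib sum_distrib_left[symmetric])
  next
    case (step y)
    then obtain e where "e \<in> F" "y = incidence a b e"
      by blast
    moreover have "a e \<in> C \<longleftrightarrow> b e \<in> C"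
      using \<open>e \<in> F\<close> unfolding C_def undirected_edges_def
      by (auto intro: rtrancl_into_rtrancl)
    ultimately show ?case
      using \<open>finite C\<close> by (simp add: \<phi>_def incidence_def sum_subtractf indicator_def of_bool_def)
  qed
  then have "\<phi> (indicator {q} - indicator {p}) = 0"
    using assms(2) .
  moreover have "p \<in> C"
    by (simp add: C_def)
  then have "\<phi> (indicator {q} - indicator {p}) = (if q \<in> C then 1 else 0) - 1"
    using \<open>finite C\<close> by (simp add: \<phi>_def sum_subtractf indicator_def of_bool_def)
  ultimately have "q \<in> C"
    by (simp split: if_splits)
  then show ?thesis
    by (simp add: C_def)
qed

lemma dim_incidence_plus_card_components:
  fixes a b :: "'e \<Rightarrow> 'w"
  assumes "finite W" "finite F" "a ` F \<subseteq> W" "b ` F \<subseteq> W"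
  shows "fvs.dim (incidence a b ` F) + card (W // (undirected_edges F a b)\<^sup>*) = card W"
  using assms(2-4)
proof (induction F rule: finite_induct)
  case empty
  have "W // Id = (\<lambda>x. {x}) ` W"
    unfolding quotient_def by blast
  moreover have "fvs.dim {} = 0"
    using fvs.dim_eq_card_independent[OF fvs.independent_empty] by simp
  ultimately show ?case
    by (simp add: undirected_edges_def card_image)
next
  case (insert e F)
  let ?E = "undirected_edges F a b"
  have IH: "fvs.dim (incidence a b ` F) + card (W // ?E\<^sup>*) = card W"
    using insert by simp
  have fin: "finite (incidence a b ` F)"
    using insert(1) by simp
  show ?case
  proof (cases "(a e, b e) \<in> ?E\<^sup>*")
    case True
    then have "incidence a b e \<in> fvs.span (incidence a b ` F)"
      using indicator_diff_in_span_incidence[OF True] by (simp add: incidence_def)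
    then have "fvs.dim (incidence a b ` insert e F) = fvs.dim (incidence a b ` F)"
      using fvs.dim_insert_finite[OF fin] by simp
    moreover have "(b e, a e) \<in> ?E\<^sup>*"
      by (rule symD[OF sym_rtrancl[OF sym_undirected_edges] True])
    then have "(undirected_edges (insert e F) a b)\<^sup>* = ?E\<^sup>*"
      unfolding undirected_edges_insert using True by (intro rtrancl_subset) auto
    ultimately show ?thesis
      using IH by simp
  next
    case False
    then have "incidence a b e \<notin> fvs.span (incidence a b ` F)"
      using connected_if_indicator_diff_in_span_incidence[OF insert(1), where p = "a e" and q = "b e"]
      unfolding incidence_def by blast
    then have "fvs.dim (incidence a b ` insert e F) = Suc (fvs.dim (incidence a b ` F))"
      using fvs.dim_insert_finite[OF fin] by simp
    moreover have "Suc (card (W // (undirected_edges (insert e F) a b)\<^sup>*)) = card (W // ?E\<^sup>*)"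
      unfolding undirected_edges_insert
      using insert.prems False assms(1)
      by (intro card_quotient_insert_sym_edge[OF sym_undirected_edges]) auto
    ultimately show ?thesis
      using IH by simp
  qed
qed

section \<open>The operators of a tensor-labeled hypergraph\<close>

lemma sum_fun_apply: "(\<Sum>i\<in>I. f i) x = (\<Sum>i\<in>I. f i x :: 'a :: comm_monoid_add)"
  by (induction I rule: infinite_finite_induct) auto

lemma linear_fscaleI:
  fixes f :: "('a \<Rightarrow> real) \<Rightarrow> ('b \<Rightarrow> real)"
  assumes "\<And>x y. f (x + y) = f x + f y" and "\<And>c x. f (fscale c x) = fscale c (f x)"
  shows "Vector_Spaces.linear fscale fscale f"
proof -
  have "vector_space (fscale :: real \<Rightarrow> ('a \<Rightarrow> real) \<Rightarrow> _)"
    and "vector_space (fscale :: real \<Rightarrow> ('b \<Rightarrow> real) \<Rightarrow> _)"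
    by (rule fvs.vector_space_axioms)+
  then show ?thesis
    unfolding Vector_Spaces.linear_iff using assms by blast
qed

lemma linear_Bmacro: "Vector_Spaces.linear fscale fscale (Bmacro Q1 A B)"
  by (rule linear_fscaleI; rule ext)
    (simp_all add: Bmacro_def fscale_def distrib_left distrib_right sum.distrib sum_distrib_left
      mult.assoc mult.left_commute)

lemma linear_bdry: "Vector_Spaces.linear fscale fscale (bdry Q1 A B)"
  by (rule linear_fscaleI; rule ext)
    (simp_all add: bdry_def fscale_def distrib_left distrib_right sum.distrib sum_distrib_left
      mult.assoc mult.left_commute)

lemma linear_trunc: "Vector_Spaces.linear fscale fscale (trunc k)"
  by (rule linear_fscaleI; rule ext) (simp_all add: trunc_def fscale_def)

lemma linear_phihat: "Vector_Spaces.linear fscale fscale (phihat Q1 A B)"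
  by (rule linear_fscaleI; rule ext)
    (simp_all add: phihat_def fscale_def distrib_left distrib_right sum.distrib sum_distrib_left
      mult.assoc mult.left_commute)

lemma linear_bdry_adj: "Vector_Spaces.linear fscale fscale (bdry_adj Q0 Q1 A B k)"
  by (rule linear_fscaleI; rule ext)
    (simp_all add: bdry_adj_def fscale_def distrib_left distrib_right sum.distrib sum_distrib_left
      mult.assoc mult.left_commute)

lemma linear_Lop: "Vector_Spaces.linear fscale fscale (Lop Q0 Q1 A B k)"
proof -
  have "Lop Q0 Q1 A B k = bdry_adj Q0 Q1 A B k \<circ> trunc k \<circ> bdry Q1 A B"
    by (simp add: Lop_def fun_eq_iff)
  then show ?thesis
    using Vector_Spaces.linear_compose linear_bdry linear_trunc linear_bdry_adj by metis
qed

lemma subspace_coord_space: "fvs.subspace (coord_space X)"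
  by (rule fvs.subspaceI) (auto simp: coord_space_def fscale_def)

lemma coord_space_eq_span:
  assumes "finite X"
  shows "coord_space X = fvs.span ((\<lambda>e. indicator {e}) ` X)"
proof
  show "coord_space X \<subseteq> fvs.span ((\<lambda>e. indicator {e}) ` X)"
  proof
    fix x assume x: "x \<in> coord_space X"
    have "x = (\<Sum>e\<in>X. fscale (x e) (indicator {e}))"
    proof
      fix v
      show "x v = (\<Sum>e\<in>X. fscale (x e) (indicator {e})) v"
        using x assms by (cases "v \<in> X") (simp_all add: sum_fun_apply fscale_def indicator_def coord_space_def)
    qed
    also have "\<dots> \<in> fvs.span ((\<lambda>e. indicator {e}) ` X)"
      by (intro fvs.span_sum fvs.span_scale fvs.span_base) simp
    finally show "x \<in> fvs.span ((\<lambda>e. indicator {e}) ` X)" .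
  qed
  show "fvs.span ((\<lambda>e. indicator {e}) ` X) \<subseteq> coord_space X"
    by (rule fvs.span_minimal[OF _ subspace_coord_space]) (auto simp: coord_space_def indicator_def)
qed

lemma Bmacro_indicator:
  assumes "finite Q1" and "e \<in> Q1"
  shows "Bmacro Q1 A B (indicator {e}) = incidence A B e"
proof
  fix v
  show "Bmacro Q1 A B (indicator {e}) v = incidence A B e v"
    using assms by (simp add: Bmacro_def incidence_def indicator_def)
qed

lemma Bmacro_image_coord_space:
  assumes "finite Q1"
  shows "Bmacro Q1 A B ` coord_space Q1 = fvs.span (incidence A B ` Q1)"
proof -
  interpret Bmacro: Vector_Spaces.linear fscale fscale "Bmacro Q1 A B"
    by (rule linear_Bmacro)
  have "incidence A B ` Q1 = Bmacro Q1 A B ` (\<lambda>e. indicator {e}) ` Q1"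
    unfolding image_image by (intro image_cong refl) (simp add: Bmacro_indicator[OF assms])
  then show ?thesis
    unfolding coord_space_eq_span[OF assms] by (simp add: Bmacro.span_image)
qed

lemma Bmacro_eq_sum: "Bmacro Q1 A B x = (\<Sum>e\<in>Q1. fscale (x e) (incidence A B e))"
  by (rule ext) (simp add: Bmacro_def sum_fun_apply fscale_def incidence_def indicator_def of_bool_def)

lemma bdry_eq_sum: "bdry Q1 A B x = (\<Sum>e\<in>Q1. fscale (x e) (B e - A e))"
  by (rule ext) (simp add: bdry_def sum_fun_apply fscale_def)

lemma phihat_incidence:
  assumes "finite Q1" and "e \<in> Q1"
  shows "phihat Q1 A B (incidence A B e) = B e - A e"
proof
  fix w
  have "A e \<in> Vmacro Q1 A B" "B e \<in> Vmacro Q1 A B"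
    using assms(2) by (auto simp: Vmacro_def)
  moreover have "finite (Vmacro Q1 A B)"
    using assms(1) by (simp add: Vmacro_def)
  ultimately show "phihat Q1 A B (incidence A B e) w = (B e - A e) w"
    by (simp add: phihat_def incidence_def indicator_def left_diff_distrib sum_subtractf Int_absorb1)
qed

lemma phihat_Bmacro:
  assumes "finite Q1"
  shows "phihat Q1 A B (Bmacro Q1 A B x) = bdry Q1 A B x"
proof -
  interpret phihat: Vector_Spaces.linear fscale fscale "phihat Q1 A B"
    by (rule linear_phihat)
  show ?thesis
    unfolding Bmacro_eq_sum bdry_eq_sum phihat.sum phihat.scale
    by (intro sum.cong refl) (simp add: phihat_incidence[OF assms])
qed

lemma Bmacro_in_coord_space: "Bmacro Q1 A B x \<in> coord_space (Vmacro Q1 A B)"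
  by (auto simp: coord_space_def Bmacro_def Vmacro_def intro!: sum.neutral)

lemma finite_words_le:
  assumes "finite Q0"
  shows "finite (words_le Q0 k)"
proof -
  have "words_le Q0 k \<subseteq> {w. set w \<subseteq> Q0 \<and> length w \<le> nat k}"
    unfolding words_le_def by auto
  then show ?thesis
    using finite_lists_length_le[OF assms] finite_subset by blast
qed

lemma bdry_eq_0_off_words:
  assumes "tl_hypergraph Q0 Q1 A B" and "\<not> set w \<subseteq> Q0"
  shows "bdry Q1 A B x w = 0"
proof -
  have "A e w = 0 \<and> B e w = 0" if "e \<in> Q1" for e
    using assms that unfolding tl_hypergraph_def is_tensor_def by blast
  then show ?thesis
    unfolding bdry_def by simp
qed

lemma Lop_eq_0_iff:
  assumes tl: "tl_hypergraph Q0 Q1 A B"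
  shows "Lop Q0 Q1 A B k x = 0 \<longleftrightarrow> trunc k (bdry Q1 A B x) = 0"
proof
  assume "trunc k (bdry Q1 A B x) = 0"
  then show "Lop Q0 Q1 A B k x = 0"
    unfolding Lop_def by (intro ext) (simp add: bdry_adj_def)
next
  assume L0: "Lop Q0 Q1 A B k x = 0"
  define m where "m = trunc k (bdry Q1 A B x)"
  let ?W = "words_le Q0 k"
  have "finite ?W"
    using tl finite_words_le by (auto simp: tl_hypergraph_def)
  \<comment> \<open>\<open>\<langle>L x, x\<rangle> = \<parallel>\<pi> \<partial> x\<parallel>\<^sup>2\<close>\<close>
  have "(\<Sum>w\<in>?W. (m w)\<^sup>2) = (\<Sum>w\<in>?W. m w * bdry Q1 A B x w)"
    by (intro sum.cong refl) (auto simp: words_le_def m_def trunc_def power2_eq_square)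
  also have "\<dots> = (\<Sum>e\<in>Q1. x e * Lop Q0 Q1 A B k x e)"
    unfolding bdry_def Lop_def bdry_adj_def m_def sum_distrib_left
    by (subst sum.swap) (auto intro!: sum.cong simp: ac_simps sum_distrib_left)
  also have "\<dots> = 0"
    using L0 by simp
  finally have "m w = 0" if "w \<in> ?W" for w
    using that sum_nonneg_eq_0_iff[OF \<open>finite ?W\<close>, of "\<lambda>w. (m w)\<^sup>2"] by simp
  moreover have "m w = 0" if "w \<notin> ?W" for w
    using that bdry_eq_0_off_words[OF tl] by (auto simp: m_def trunc_def words_le_def)
  ultimately show "m = 0"
    by (intro ext) (metis zero_fun_apply)
qed

lemma rankL_eq_dim_trunc_bdry_image:
  assumes tl: "tl_hypergraph Q0 Q1 A B" and "0 \<le> j"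
  shows "rankL Q0 Q1 A B j = fvs.dim ((trunc j \<circ> bdry Q1 A B) ` coord_space Q1)"
proof -
  let ?S = "coord_space Q1"
  have "finite Q1"
    using tl by (simp add: tl_hypergraph_def)
  then have S: "finite ((\<lambda>e. indicator {e}) ` Q1)" "?S \<subseteq> fvs.span ((\<lambda>e. indicator {e}) ` Q1)"
    using coord_space_eq_span by auto
  have "fvs.dim (Lop Q0 Q1 A B j ` ?S) + fvs.dim {x \<in> ?S. Lop Q0 Q1 A B j x = 0} = fvs.dim ?S"
    by (rule linear.dim_image_plus_dim_kernel[OF linear_Lop subspace_coord_space S])
  moreover have "fvs.dim ((trunc j \<circ> bdry Q1 A B) ` ?S)
      + fvs.dim {x \<in> ?S. (trunc j \<circ> bdry Q1 A B) x = 0} = fvs.dim ?S"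
    by (rule linear.dim_image_plus_dim_kernel[OF Vector_Spaces.linear_compose[OF linear_bdry linear_trunc]
          subspace_coord_space S])
  moreover have "{x \<in> ?S. Lop Q0 Q1 A B j x = 0} = {x \<in> ?S. (trunc j \<circ> bdry Q1 A B) x = 0}"
    using Lop_eq_0_iff[OF tl] by auto
  ultimately show ?thesis
    using \<open>0 \<le> j\<close> by (simp add: rankL_def)
qed

lemma dim_Bmacro_image:
  assumes "tl_hypergraph Q0 Q1 A B"
  shows "int (fvs.dim (Bmacro Q1 A B ` coord_space Q1)) = delta_le Q1 A B (-1)"
proof -
  have "finite Q1"
    using assms by (simp add: tl_hypergraph_def)
  moreover have "finite (Vmacro Q1 A B)" "A ` Q1 \<subseteq> Vmacro Q1 A B" "B ` Q1 \<subseteq> Vmacro Q1 A B"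
    using \<open>finite Q1\<close> by (auto simp: Vmacro_def)
  ultimately have "fvs.dim (incidence A B ` Q1) + card (Vmacro Q1 A B // (undirected_edges Q1 A B)\<^sup>*)
      = card (Vmacro Q1 A B)"
    by (intro dim_incidence_plus_card_components)
  then have "card (Vmacro Q1 A B) = fvs.dim (incidence A B ` Q1) + c_macro Q1 A B"
    by (simp add: c_macro_def macro_conn_def undirected_edges_def)
  moreover have "fvs.dim (Bmacro Q1 A B ` coord_space Q1) = fvs.dim (incidence A B ` Q1)"
    unfolding Bmacro_image_coord_space[OF \<open>finite Q1\<close>] by (rule fvs.dim_span)
  ultimately show ?thesis
    by (simp add: delta_le_def)
qed

lemma rankL_plus_delta_le:
  assumes tl: "tl_hypergraph Q0 Q1 A B" and "0 \<le> j"
  shows "int (rankL Q0 Q1 A B j) + delta_le Q1 A B j = delta_le Q1 A B (-1)"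
proof -
  let ?U = "Bmacro Q1 A B ` coord_space Q1"
  let ?P = "trunc j \<circ> phihat Q1 A B"
  have "finite Q1"
    using tl by (simp add: tl_hypergraph_def)
  have "?P ` ?U = (trunc j \<circ> bdry Q1 A B) ` coord_space Q1"
    unfolding image_comp by (simp add: comp_def phihat_Bmacro[OF \<open>finite Q1\<close>])
  then have rank: "rankL Q0 Q1 A B j = fvs.dim (?P ` ?U)"
    using rankL_eq_dim_trunc_bdry_image[OF assms] by simp
  have "?U \<inter> {y \<in> coord_space (Vmacro Q1 A B). trunc j (phihat Q1 A B y) = (\<lambda>_. 0)}
      = {y \<in> ?U. ?P y = 0}"
    using Bmacro_in_coord_space by (auto simp: zero_fun_def)
  then have delta: "delta_le Q1 A B j = int (fvs.dim {y \<in> ?U. ?P y = 0})"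
    using \<open>0 \<le> j\<close> by (simp add: delta_le_def)
  interpret Bmacro: Vector_Spaces.linear fscale fscale "Bmacro Q1 A B"
    by (rule linear_Bmacro)
  have "?U \<subseteq> fvs.span (incidence A B ` Q1)"
    by (simp add: Bmacro_image_coord_space[OF \<open>finite Q1\<close>])
  then have "fvs.dim (?P ` ?U) + fvs.dim {y \<in> ?U. ?P y = 0} = fvs.dim ?U"
    by (rule linear.dim_image_plus_dim_kernel[OF Vector_Spaces.linear_compose[OF linear_phihat linear_trunc]
          Bmacro.subspace_image[OF subspace_coord_space] finite_imageI[OF \<open>finite Q1\<close>]])
  then show ?thesis
    using rank delta dim_Bmacro_image[OF tl] by linarith
qed

theorem corollary6p11:
  fixes Q0 :: "'v set" and Q1 :: "'e set"
    and A B :: "'e \<Rightarrow> 'v list \<Rightarrow> real"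
    and k :: nat
  assumes "tl_hypergraph Q0 Q1 A B"
  shows "int (rankL Q0 Q1 A B (int k)) - int (rankL Q0 Q1 A B (int k - 1))
           = delta_le Q1 A B (int k - 1) - delta_le Q1 A B (int k)"
proof (cases "k = 0")
  case True
  then show ?thesis
    using rankL_plus_delta_le[OF assms, of 0] by (simp add: rankL_def)
next
  case False
  then show ?thesis
    using rankL_plus_delta_le[OF assms, of "int k"] rankL_plus_delta_le[OF assms, of "int k - 1"] by simp
qed

end
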